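(* Let $(\mathbf x,B)$ be a seed of $\mathcal F$ and assume that the cluster monomials of $\mathcal A(\mathbf x,B)$ are linearly independent over $K$. Let $(\mathbf y,C)$ be a seed mutation equivalent to $(\mathbf x,B)$ and let $(\mathbf z,D)=\mu_n\cdots\mu_2\mu_1(\mathbf y,C)$. Then the clusters $\mathbf y$ and $\mathbf z$ are disjoint, i.e. $\{y_1,\dots,y_n\}\cap\{z_1,\dots,z_n\}=\varnothing$.
   Context: Let $K$ be a field of characteristic $0$ or $K=\mathbb Z$. Fix integers $m\ge p\ge n\ge 1$ with $m>1$, and let $\mathcal F=K(X_1,\dots,X_m)$. For $B=(b_{ij})\in M_{m,n}(\mathbb Z)$ the principal part $B^\circ$ is the $n\times n$ matrix formed by the first $n$ rows. $B$ is connected if the graph with vertices $1,\dots,m$ and an edge between $i$ and $j$ whenever $b_{ij}\neq 0$ or $b_{ji}\ne 0$ is connected. A square integer matrix $A$ is skew-symmetrizable if $DA$ is skew-symmetric for some diagonal integer matrix $D$ with positive diagonal entries. A seed of $\mathcal F$ is a pair $(\mathbf x,B)$ where $B\in M_{m,n}(\mathbb Z)$ is connected with $B^\circ$ skew-symmetrizable, and $\mathbf x=(x_1,\dots,x_m)$ is an $m$-tuple of elements of $\mathcal F$ algebraically independent over $K$. For $1\le k\le n$ the mutation $\mu_k(\mathbf x,B)=(\mathbf x',B')$ is given by $b'_{ij}=-b_{ij}$ if $i=k$ or $j=k$, and $b'_{ij}=b_{ij}+\frac{|b_{ik}|b_{kj}+b_{ik}|b_{kj}|}{2}$ otherwise;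 $x'_s=x_s$ for $s\neq k$ and $x'_k=x_k^{-1}\big(\prod_{b_{ik}>0}x_i^{b_{ik}}+\prod_{b_{ik}<0}x_i^{-b_{ik}}\big)$. Two seeds are mutation equivalent if one is obtained from the other by a finite sequence of mutations $\mu_{i_1},\dots,\mu_{i_t}$ with $1\le i_j\le n$. The cluster algebra $\mathcal A(\mathbf x,B)$ is the $K$-subalgebra of $\mathcal F$ generated by $x_{n+1}^{\pm1},\dots,x_p^{\pm1},x_{p+1},\dots,x_m$ together with all elements $y_1,\dots,y_n$ for all seeds $(\mathbf y,C)$ mutation equivalent to $(\mathbf x,B)$; for such a seed, $\mathbf y$ is a cluster, and the elements $y_1^{a_1}\cdots y_m^{a_m}$ with all $a_i\ge 0$ (over all clusters $\mathbf y$) are the cluster monomials. *)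

theory Defs
  imports "HOL-Library.Poly_Mapping" "HOL-Computational_Algebra.Fraction_Field"
begin

text \<open>Multivariate polynomials over K in the variables X_0, X_1, ... (0-based indexing),
  and their fraction field. The ambient field F = K(X_0,...,X_(m-1)) is carried by the
  subset ratfun_field m of this fraction field. For K = Z the fraction field of Z[X] is Q(X).\<close>

type_synonym 'k mpoly = "(nat \<Rightarrow>\<^sub>0 nat) \<Rightarrow>\<^sub>0 'k"
type_synonym 'k ratfun = "'k mpoly fract"

definition mpoly_vars :: "'k::zero mpoly \<Rightarrow> nat set" where
  "mpoly_vars P = (\<Union>a\<in>Poly_Mapping.keys P. Poly_Mapping.keys (a :: nat \<Rightarrow>\<^sub>0 nat))"

definition const_rf :: "'k::idom \<Rightarrow> 'k ratfun" where
  "const_rf c = Fract (Poly_Mapping.single 0 c) 1"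

definition ratfun_field :: "nat \<Rightarrow> 'k::idom ratfun set" where
  "ratfun_field m = {Fract P Q | P Q. Q \<noteq> 0 \<and> mpoly_vars P \<subseteq> {..<m} \<and> mpoly_vars Q \<subseteq> {..<m}}"

definition mpoly_eval :: "'k::idom mpoly \<Rightarrow> (nat \<Rightarrow> 'k ratfun) \<Rightarrow> 'k ratfun" where
  "mpoly_eval P x = (\<Sum>a\<in>Poly_Mapping.keys P. const_rf (Poly_Mapping.lookup P a) * (\<Prod>i\<in>Poly_Mapping.keys a. x i ^ Poly_Mapping.lookup a i))"

definition alg_indep :: "nat \<Rightarrow> (nat \<Rightarrow> 'k::idom ratfun) \<Rightarrow> bool" where
  "alg_indep m x \<longleftrightarrow> (\<forall>P. mpoly_vars P \<subseteq> {..<m} \<longrightarrow> mpoly_eval P x = 0 \<longrightarrow> P = 0)"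

text \<open>Exchange matrices B: rows 0..m-1, columns 0..n-1 (entries outside are irrelevant).\<close>
definition connected_mat :: "nat \<Rightarrow> nat \<Rightarrow> (nat \<Rightarrow> nat \<Rightarrow> int) \<Rightarrow> bool" where
  "connected_mat m n B \<longleftrightarrow>
     (let E = {(i, j). i < m \<and> j < m \<and> ((j < n \<and> B i j \<noteq> 0) \<or> (i < n \<and> B j i \<noteq> 0))}
      in \<forall>i<m. \<forall>j<m. (i, j) \<in> E\<^sup>*)"

definition skew_symmetrizable :: "nat \<Rightarrow> (nat \<Rightarrow> nat \<Rightarrow> int) \<Rightarrow> bool" where
  "skew_symmetrizable n A \<longleftrightarrow>
     (\<exists>d::nat \<Rightarrow> int. (\<forall>i<n. d i > 0) \<and> (\<forall>i<n. \<forall>j<n. d i * A i j = - (d j * A j i)))"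

definition is_seed :: "nat \<Rightarrow> nat \<Rightarrow> (nat \<Rightarrow> 'k::idom ratfun) \<times> (nat \<Rightarrow> nat \<Rightarrow> int) \<Rightarrow> bool" where
  "is_seed m n s \<longleftrightarrow> connected_mat m n (snd s) \<and> skew_symmetrizable n (snd s)
     \<and> (\<forall>i<m. fst s i \<in> ratfun_field m) \<and> alg_indep m (fst s)"

definition mut_mat :: "nat \<Rightarrow> (nat \<Rightarrow> nat \<Rightarrow> int) \<Rightarrow> (nat \<Rightarrow> nat \<Rightarrow> int)" where
  "mut_mat k B = (\<lambda>i j. if i = k \<or> j = k then - B i j
      else B i j + (\<bar>B i k\<bar> * B k j + B i k * \<bar>B k j\<bar>) div 2)"

definition mut_cluster :: "nat \<Rightarrow> nat \<Rightarrow> (nat \<Rightarrow> nat \<Rightarrow> int) \<Rightarrow> (nat \<Rightarrow> 'k::idom ratfun) \<Rightarrow> (nat \<Rightarrow> 'k ratfun)" where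
  "mut_cluster m k B x = x(k := inverse (x k) *
      ((\<Prod>i\<in>{i. i < m \<and> B i k > 0}. x i ^ nat (B i k)) +
       (\<Prod>i\<in>{i. i < m \<and> B i k < 0}. x i ^ nat (- B i k))))"

definition mutate :: "nat \<Rightarrow> nat \<Rightarrow> (nat \<Rightarrow> 'k::idom ratfun) \<times> (nat \<Rightarrow> nat \<Rightarrow> int)
    \<Rightarrow> (nat \<Rightarrow> 'k ratfun) \<times> (nat \<Rightarrow> nat \<Rightarrow> int)" where
  "mutate m k s = (mut_cluster m k (snd s) (fst s), mut_mat k (snd s))"

inductive mut_equiv :: "nat \<Rightarrow> nat \<Rightarrow> (nat \<Rightarrow> 'k::idom ratfun) \<times> (nat \<Rightarrow> nat \<Rightarrow> int)
    \<Rightarrow> (nat \<Rightarrow> 'k ratfun) \<times> (nat \<Rightarrow> nat \<Rightarrow> int) \<Rightarrow> bool"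
  for m n s where
  refl: "mut_equiv m n s s"
| step: "mut_equiv m n s t \<Longrightarrow> k < n \<Longrightarrow> mut_equiv m n s (mutate m k t)"

definition cluster_monomials :: "nat \<Rightarrow> nat \<Rightarrow> (nat \<Rightarrow> 'k::idom ratfun) \<times> (nat \<Rightarrow> nat \<Rightarrow> int)
    \<Rightarrow> 'k ratfun set" where
  "cluster_monomials m n s =
     {\<Prod>i<m. y i ^ a i | y C a. mut_equiv m n s (y, C)}"

definition lin_indep_over_K :: "'k::idom ratfun set \<Rightarrow> bool" where
  "lin_indep_over_K S \<longleftrightarrow>
     (\<forall>T (c :: 'k ratfun \<Rightarrow> 'k). finite T \<longrightarrow> T \<subseteq> S \<longrightarrow>
        (\<Sum>u\<in>T. const_rf (c u) * u) = 0 \<longrightarrow> (\<forall>u\<in>T. c u = 0))"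

text \<open>K is a field of characteristic 0, or K is (isomorphic to) Z.\<close>
definition admissible_base :: "'k::idom itself \<Rightarrow> bool" where
  "admissible_base _ \<longleftrightarrow>
     (inj (of_nat :: nat \<Rightarrow> 'k) \<and> (\<forall>c::'k. c \<noteq> 0 \<longrightarrow> c dvd 1)) \<or> bij (of_int :: int \<Rightarrow> 'k)"

end

theory Submission
  imports Defs
begin

text \<open>Suppose \<open>y\<^sub>i = z\<^sub>j\<close>. The variable \<open>z\<^sub>j\<close> is created by the mutation at \<open>j\<close> of the
  seed \<open>(w, D) = \<mu>\<^sub>j\<^sub>-\<^sub>1 \<cdots> \<mu>\<^sub>1 (y, C)\<close>, whose \<open>j\<close>-th variable is still \<open>y\<^sub>j\<close>, so the
  exchange relation reads \<open>y\<^sub>i y\<^sub>j = P\<^sub>1 + P\<^sub>2\<close> with \<open>P\<^sub>1, P\<^sub>2\<close> monomials in the cluster \<open>w\<close>.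
  Thus a cluster monomial of \<open>y\<close> is the sum of two cluster monomials of \<open>w\<close>, which a linearly
  independent set of nonzero elements forbids.\<close>

lemma const_rf_one: "const_rf 1 = (1 :: 'k::idom ratfun)"
  by (simp add: const_rf_def One_fract_def)

lemma const_rf_uminus: "const_rf (- c) = - (const_rf c :: 'k::idom ratfun)"
  by (simp add: const_rf_def single_uminus)

lemma const_rf_add: "const_rf (a + b) = const_rf a + (const_rf b :: 'k::idom ratfun)"
  by (simp add: const_rf_def single_add)

lemma const_rf_neg_two: "const_rf (- 2) = (- 2 :: 'k::idom ratfun)"
  by (metis const_rf_add const_rf_one const_rf_uminus one_add_one)

lemma lin_indep_over_KD:
  assumes "lin_indep_over_K S" "finite T" "T \<subseteq> S" "(\<Sum>u\<in>T. const_rf (c u) * u) = 0" "v \<in> T"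
  shows "c v = 0"
  using assms unfolding lin_indep_over_K_def by blast

lemma lin_indep_over_K_zero_notin:
  assumes "lin_indep_over_K (S :: 'k::idom ratfun set)"
  shows "0 \<notin> S"
proof
  assume "0 \<in> S"
  then have "(1::'k) = 0"
    using lin_indep_over_KD[OF assms, of "{0}" "\<lambda>_. 1::'k" 0] by simp
  then show False by simp
qed

lemma lin_indep_over_K_not_sum:
  assumes L: "lin_indep_over_K (S :: 'k::idom ratfun set)"
    and S: "u \<in> S" "a \<in> S" "b \<in> S"
  shows "u \<noteq> a + b"
proof
  assume eq: "u = a + b"
  have "a \<noteq> 0" "b \<noteq> 0" using S lin_indep_over_K_zero_notin[OF L] by auto
  with eq have "u \<noteq> a" "u \<noteq> b" by auto
  show False
  proof (cases "a = b")
    case True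
    define c :: "'k ratfun \<Rightarrow> 'k" where "c = (\<lambda>v. if v = u then 1 else - 2)"
    have "(\<Sum>v\<in>{u, a}. const_rf (c v) * v) = 0"
      using \<open>u \<noteq> a\<close> True eq by (simp add: c_def const_rf_one const_rf_neg_two)
    then have "c u = 0" using S by (intro lin_indep_over_KD[OF L, of "{u, a}"]) auto
    then show False by (simp add: c_def)
  next
    case False
    define c :: "'k ratfun \<Rightarrow> 'k" where "c = (\<lambda>v. if v = u then 1 else - 1)"
    have "(\<Sum>v\<in>{u, a, b}. const_rf (c v) * v) = 0"
      using \<open>u \<noteq> a\<close> \<open>u \<noteq> b\<close> False eq by (simp add: c_def const_rf_one const_rf_uminus)
    then have "c u = 0" using S by (intro lin_indep_over_KD[OF L, of "{u, a, b}"]) auto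
    then show False by (simp add: c_def)
  qed
qed

definition mutate_upto ::
    "nat \<Rightarrow> (nat \<Rightarrow> 'k::idom ratfun) \<times> (nat \<Rightarrow> nat \<Rightarrow> int) \<Rightarrow> nat
      \<Rightarrow> (nat \<Rightarrow> 'k ratfun) \<times> (nat \<Rightarrow> nat \<Rightarrow> int)" where
  "mutate_upto m s k = foldl (\<lambda>s k. mutate m k s) s [0..<k]"

lemma mutate_upto_0 [simp]: "mutate_upto m s 0 = s"
  by (simp add: mutate_upto_def)

lemma mutate_upto_Suc [simp]: "mutate_upto m s (Suc k) = mutate m k (mutate_upto m s k)"
  by (simp add: mutate_upto_def)

lemma fst_mutate_other: "j \<noteq> k \<Longrightarrow> fst (mutate m k s) j = fst s j"
  by (simp add: mutate_def mut_cluster_def)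

lemma fst_mutate_upto_unchanged: "k \<le> j \<Longrightarrow> fst (mutate_upto m s k) j = fst s j"
  by (induction k) (simp_all add: fst_mutate_other)

lemma fst_mutate_upto_frozen:
  "j < k \<Longrightarrow> fst (mutate_upto m s k) j = fst (mutate_upto m s (Suc j)) j"
  by (induction k) (auto simp: fst_mutate_other less_Suc_eq)

lemma mut_equiv_mutate_upto:
  "mut_equiv m n s t \<Longrightarrow> k \<le> n \<Longrightarrow> mut_equiv m n s (mutate_upto m t k)"
  by (induction k) (simp_all add: mut_equiv.step)

lemma cluster_monomialsI:
  "mut_equiv m n s (w, D) \<Longrightarrow> (\<Prod>i<m. w i ^ a i) \<in> cluster_monomials m n s"
  unfolding cluster_monomials_def by blast

lemma cluster_monomials_mult:
  assumes "mut_equiv m n s (w, D)"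
  shows "(\<Prod>i<m. w i ^ a i) * (\<Prod>i<m. w i ^ b i) \<in> cluster_monomials m n s"
proof -
  have "(\<Prod>i<m. w i ^ a i) * (\<Prod>i<m. w i ^ b i) = (\<Prod>i<m. w i ^ (a i + b i))"
    by (simp add: power_add prod.distrib)
  then show ?thesis by (simp only: cluster_monomialsI[OF assms])
qed

lemma prod_power_indicator:
  "j < (m::nat) \<Longrightarrow> (\<Prod>i<m. w i ^ (if i = j then 1 else 0)) = (w j :: 'a::comm_monoid_mult)"
  by (simp add: if_distrib prod.delta cong: if_cong)

lemma cluster_variable_product_in_cluster_monomials:
  assumes "mut_equiv m n s (w, D)" "i < m" "j < m"
  shows "w i * w j \<in> cluster_monomials m n s"
  using cluster_monomials_mult[OF assms(1), of "\<lambda>k. if k = i then 1 else 0" "\<lambda>k. if k = j then 1 else 0"]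
  by (simp add: prod_power_indicator assms(2,3))

lemma cluster_variable_in_cluster_monomials:
  assumes "mut_equiv m n s (w, D)" "j < m"
  shows "w j \<in> cluster_monomials m n s"
  using cluster_monomialsI[OF assms(1), of "\<lambda>i. if i = j then 1 else 0"]
  by (simp add: prod_power_indicator assms(2))

lemma restricted_prod_in_cluster_monomials:
  assumes "mut_equiv m n s (w, D)"
  shows "(\<Prod>i\<in>{i. i < m \<and> P i}. w i ^ e i) \<in> cluster_monomials m n s"
proof -
  have "{i. i < m \<and> P i} = {i\<in>{..<m}. P i}" by auto
  then have "(\<Prod>i\<in>{i. i < m \<and> P i}. w i ^ e i) = (\<Prod>i<m. if P i then w i ^ e i else 1)"
    by (simp only: prod.inter_filter[OF finite_lessThan])
  also have "\<dots> = (\<Prod>i<m. w i ^ (if P i then e i else 0))"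
    by (rule prod.cong) auto
  finally show ?thesis by (simp only: cluster_monomialsI[OF assms])
qed

lemma exchange_relation_in_cluster_monomials:
  assumes "mut_equiv m n s (w, D)" "w k \<noteq> 0"
  obtains P Q where "P \<in> cluster_monomials m n s" "Q \<in> cluster_monomials m n s"
    "fst (mutate m k (w, D)) k * w k = P + Q"
proof -
  define P where "P = (\<Prod>i\<in>{i. i < m \<and> D i k > 0}. w i ^ nat (D i k))"
  define Q where "Q = (\<Prod>i\<in>{i. i < m \<and> D i k < 0}. w i ^ nat (- D i k))"
  have "fst (mutate m k (w, D)) k * w k = P + Q"
    using assms(2) by (simp add: mutate_def mut_cluster_def P_def Q_def)
  moreover have "P \<in> cluster_monomials m n s" "Q \<in> cluster_monomials m n s"
    unfolding P_def Q_def by (rule restricted_prod_in_cluster_monomials[OF assms(1)])+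
  ultimately show thesis using that by blast
qed

theorem proposition4p3:
  fixes m p n :: nat
    and x :: "nat \<Rightarrow> 'k::idom ratfun" and B :: "nat \<Rightarrow> nat \<Rightarrow> int"
    and y :: "nat \<Rightarrow> 'k ratfun" and C :: "nat \<Rightarrow> nat \<Rightarrow> int"
  assumes K: "admissible_base TYPE('k)"
    and dims: "1 \<le> n" "n \<le> p" "p \<le> m" "1 < m"
    and seed: "is_seed m n (x, B)"
    and indep: "lin_indep_over_K (cluster_monomials m n (x, B))"
    and equiv: "mut_equiv m n (x, B) (y, C)"
  shows "{y i | i. i < n} \<inter> {fst (foldl (\<lambda>s k. mutate m k s) (y, C) [0..<n]) i | i. i < n} = {}"
proof (rule ccontr)
  let ?S = "cluster_monomials m n (x, B)"
  assume "\<not> ?thesis"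
  then obtain i j where ij: "i < n" "j < n"
    and yi: "y i = fst (mutate_upto m (y, C) n) j"
    unfolding mutate_upto_def by blast
  with dims have "i < m" "j < m" by auto
  obtain w D where wD: "mutate_upto m (y, C) j = (w, D)" by fastforce
  have equiv_w: "mut_equiv m n (x, B) (w, D)"
    using mut_equiv_mutate_upto[OF equiv, of j] ij wD by simp
  have wj: "w j = y j"
    using fst_mutate_upto_unchanged[of j j m "(y, C)"] wD by simp
  have "y j \<in> ?S" using cluster_variable_in_cluster_monomials[OF equiv \<open>j < m\<close>] .
  then have "w j \<noteq> 0" using wj lin_indep_over_K_zero_notin[OF indep] by auto
  then obtain P Q where PQ: "P \<in> ?S" "Q \<in> ?S" and exch: "fst (mutate m j (w, D)) j * w j = P + Q"
    using exchange_relation_in_cluster_monomials[OF equiv_w] by blast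
  have "y i = fst (mutate m j (w, D)) j"
    using yi fst_mutate_upto_frozen[of j n m "(y, C)"] ij wD by simp
  with exch wj have "y i * y j = P + Q" by simp
  moreover have "y i * y j \<in> ?S"
    using cluster_variable_product_in_cluster_monomials[OF equiv \<open>i < m\<close> \<open>j < m\<close>] .
  ultimately show False using lin_indep_over_K_not_sum[OF indep _ PQ] by blast
qed

end
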